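(* Let $X$ be a separable real Banach space with property (au$^*$). Then $X^*$ has no proper closed norming subspace; i.e. if $M\subseteq X^*$ is a norm-closed linear subspace such that $\|x\|=\sup\{|m(x)|: m\in M,\ \|m\|\le 1\}$ for every $x\in X$, then $M=X^*$. Consequently $X^*$ is separable.
   Context: All Banach spaces are real. A separable Banach space $X$ has property (au$^*$) if $\lim_{n\to\infty}(\|x^*+x_n^*\|-\|x^*-x_n^*\|)=0$ whenever $x^*\in X^*$ and $(x_n^* )_{n\ge1}$ is a weak$^*$-null sequence in $X^*$. *)

theory Defs
  imports "HOL-Analysis.Analysis"
begin

(*The dual of a real Banach space 'a is the type 'a =>L real of bounded linear
functionals with the operator norm. A sequence in the dual is weak*-null if it converges
to 0 pointwise on 'a. *)

definition weak_star_null :: "(nat \<Rightarrow> ('a::real_normed_vector \<Rightarrow>\<^sub>L real)) \<Rightarrow> bool" where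
  "weak_star_null f \<longleftrightarrow> (\<forall>x. (\<lambda>n. blinfun_apply (f n) x) \<longlonglongrightarrow> 0)"

definition property_au_star :: "'a::real_normed_vector itself \<Rightarrow> bool" where
  "property_au_star TYPE('a) \<longleftrightarrow>
     (\<forall>(g::'a \<Rightarrow>\<^sub>L real) f. weak_star_null f \<longrightarrow>
        (\<lambda>n. norm (g + f n) - norm (g - f n)) \<longlonglongrightarrow> 0)"

definition norming :: "('a::real_normed_vector \<Rightarrow>\<^sub>L real) set \<Rightarrow> bool" where
  "norming M \<longleftrightarrow>
     (\<forall>x::'a. norm x = Sup {\<bar>blinfun_apply m x\<bar> | m. m \<in> M \<and> norm m \<le> 1})"

end

theory Submission
  imports Defs
begin

text \<open>
  (1) Hahn-Banach, in the form needed here: every x has a norming functional of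
      norm at most 1.  It is proved by Zorn's lemma on graphs of partial linear
      functionals dominated by the norm, together with the one-step extension.
  (2) If M is a norming subspace of X*, its unit ball approximates every functional
      of norm at most 1 on any finite set of points.  This is a separation argument
      in finitely many coordinates, done by hand with an approximate nearest point.
  (3) Consequently, for a dense sequence in X, every z in the unit ball of X* is
      the weak*-limit of a sequence in the unit ball of M.
  (4) If M were a proper closed norming subspace, Riesz's lemma gives a unit z far
      from M; approximating z by m_n as in (3) violates (au*), because
      norm (z + (m_n - z)) is at most 1 while norm (z - (m_n - z)) is at least 4/3.
  (5) Norming functionals of a dense sequence span a separable closed norming
      subspace; by (4) it is all of X*, so X* is separable.
\<close>

lemma abs_blinfun_le_norm:
  fixes f :: "'a::real_normed_vector \<Rightarrow>\<^sub>L real"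
  assumes "norm f \<le> 1"
  shows "\<bar>blinfun_apply f x\<bar> \<le> norm x"
proof -
  have "\<bar>blinfun_apply f x\<bar> \<le> norm f * norm x" using norm_blinfun[of f x] by simp
  also have "\<dots> \<le> norm x" using assms by (simp add: mult_left_le_one_le)
  finally show ?thesis .
qed

text \<open>Linearity of G forces it to
  be the graph of a function on its domain (see below).\<close>
definition dominated_graph :: "('a::real_normed_vector \<times> real) set \<Rightarrow> bool" where
  "dominated_graph G \<longleftrightarrow> subspace G \<and> (\<forall>(x, a)\<in>G. a \<le> norm x)"

text \<open>The choice of a value c at a new point z that keeps the extension dominated:
  every lower bound a - norm (y - z) lies below every upper bound norm (y' + z) - b.\<close>
lemma dominated_graph_extension_constant:
  assumes "dominated_graph G"
  shows "\<exists>c. (\<forall>(y, a)\<in>G. a - norm (y - z) \<le> c) \<and> (\<forall>(y, b)\<in>G. c \<le> norm (y + z) - b)"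
proof -
  have G: "subspace G" and dom: "\<And>y a. (y, a) \<in> G \<Longrightarrow> a \<le> norm y"
    using assms unfolding dominated_graph_def by auto
  have gap: "a - norm (y - z) \<le> norm (y' + z) - b" if "(y, a) \<in> G" "(y', b) \<in> G" for y a y' b
  proof -
    have "a + b \<le> norm (y + y')" using dom subspace_add[OF G that] by simp
    also have "\<dots> = norm ((y - z) + (y' + z))" by simp
    also have "\<dots> \<le> norm (y - z) + norm (y' + z)" by (rule norm_triangle_ineq)
    finally show ?thesis by simp
  qed
  define S where "S = {a - norm (y - z) | y a. (y, a) \<in> G}"
  have "(0, 0) \<in> G" using subspace_0[OF G] by (simp add: zero_prod_def)
  then have "S \<noteq> {}" and "bdd_above S"
    unfolding S_def bdd_above_def using gap by blast+
  then show ?thesis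
  proof (intro exI[of _ "Sup S"] conjI ballI; clarify)
    show "a - norm (y - z) \<le> Sup S" if "(y, a) \<in> G" for y a
      using that \<open>bdd_above S\<close> unfolding S_def by (blast intro: cSup_upper)
    show "Sup S \<le> norm (y + z) - b" if "(y, b) \<in> G" for y b
      using \<open>S \<noteq> {}\<close> that gap unfolding S_def by (blast intro: cSup_least)
  qed
qed

text \<open>With c chosen as above, the value a + t * c at y + t z stays dominated by the
  norm: for t \<noteq> 0 this is one of the two bounds on c applied to (y, a) scaled by 1/|t|.\<close>
lemma dominated_graph_extension_value:
  assumes "dominated_graph G" and "(y, a) \<in> G"
    and below: "\<And>y a. (y, a) \<in> G \<Longrightarrow> a - norm (y - z) \<le> c"
    and above: "\<And>y b. (y, b) \<in> G \<Longrightarrow> c \<le> norm (y + z) - b"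
  shows "a + t * c \<le> norm (y + t *\<^sub>R z)"
proof -
  have G: "subspace G" and dom: "\<And>y a. (y, a) \<in> G \<Longrightarrow> a \<le> norm y"
    using assms(1) unfolding dominated_graph_def by auto
  have scaled: "(r *\<^sub>R y, r * a) \<in> G" for r
    using subspace_scale[OF G assms(2), of r] by simp
  show ?thesis
  proof (cases t "0::real" rule: linorder_cases)
    case less
    have "(1/-t) * a - norm ((1/-t) *\<^sub>R y - z) \<le> c" using below[OF scaled] .
    then have "a - (-t) * norm ((1/-t) *\<^sub>R y - z) \<le> (-t) * c" using less by (simp add: field_simps)
    also have "(-t) * norm ((1/-t) *\<^sub>R y - z) = norm ((-t) *\<^sub>R ((1/-t) *\<^sub>R y - z))"
      using less by simp
    also have "(-t) *\<^sub>R ((1/-t) *\<^sub>R y - z) = y + t *\<^sub>R z"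
      using less by (simp add: scaleR_diff_right)
    finally show ?thesis by simp
  next
    case equal
    then show ?thesis using dom[OF assms(2)] by simp
  next
    case greater
    have "c \<le> norm ((1/t) *\<^sub>R y + z) - (1/t) * a" using above[OF scaled] .
    then have "t * c \<le> t * norm ((1/t) *\<^sub>R y + z) - a" using greater by (simp add: field_simps)
    also have "t * norm ((1/t) *\<^sub>R y + z) = norm (t *\<^sub>R ((1/t) *\<^sub>R y + z))"
      using greater by simp
    also have "t *\<^sub>R ((1/t) *\<^sub>R y + z) = y + t *\<^sub>R z"
      using greater by (simp add: scaleR_add_right)
    finally show ?thesis by simp
  qed
qed

lemma dominated_graph_extend:
  assumes "dominated_graph G" and "z \<notin> fst ` G"
  shows "\<exists>G'. dominated_graph G' \<and> G \<subset> G'"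
proof -
  have G: "subspace G" using assms(1) unfolding dominated_graph_def by auto
  obtain c where below: "\<And>y a. (y, a) \<in> G \<Longrightarrow> a - norm (y - z) \<le> c"
    and above: "\<And>y b. (y, b) \<in> G \<Longrightarrow> c \<le> norm (y + z) - b"
    using dominated_graph_extension_constant[OF assms(1)] by fast
  define G' where "G' = {p + q | p q. p \<in> G \<and> q \<in> span {(z, c)}}"
  have "subspace G'" unfolding G'_def by (intro subspace_sums G subspace_span)
  moreover have "\<forall>(x, a)\<in>G'. a \<le> norm x"
    unfolding G'_def span_singleton
    using dominated_graph_extension_value[OF assms(1) _ below above] by auto
  moreover have "G \<subseteq> G'"
    unfolding G'_def using span_0[of "{(z, c)}"]
    by (metis (mono_tags, lifting) add.right_neutral mem_Collect_eq subsetI)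
  moreover have "(z, c) \<in> G' - G"
  proof -
    have "(z, c) = 0 + (z, c)" by simp
    then have "(z, c) \<in> G'"
      unfolding G'_def using subspace_0[OF G] span_base[of "(z, c)"] by blast
    then show ?thesis using assms(2) by force
  qed
  ultimately show ?thesis unfolding dominated_graph_def by blast
qed

lemma dominated_graph_chain_Union:
  assumes "C \<noteq> {}" and "\<And>G. G \<in> C \<Longrightarrow> dominated_graph G"
    and "\<And>G H. G \<in> C \<Longrightarrow> H \<in> C \<Longrightarrow> G \<subseteq> H \<or> H \<subseteq> G"
  shows "dominated_graph (\<Union>C)"
proof -
  have sub: "subspace G" if "G \<in> C" for G
    using assms(2)[OF that] unfolding dominated_graph_def by blast
  have "subspace (\<Union>C)"
    unfolding subspace_def
  proof (intro conjI ballI allI)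
    show "0 \<in> \<Union>C" using assms(1) sub subspace_0 by blast
  next
    fix p q assume "p \<in> \<Union>C" "q \<in> \<Union>C"
    then obtain K where "K \<in> C" "p \<in> K" "q \<in> K" using assms(3) by blast
    then show "p + q \<in> \<Union>C" using sub subspace_add by blast
  next
    fix r p assume "p \<in> \<Union>C"
    then show "r *\<^sub>R p \<in> \<Union>C" using sub subspace_scale by blast
  qed
  then show ?thesis using assms(2) unfolding dominated_graph_def by blast
qed

lemma total_dominated_graph:
  fixes x0 :: "'a::real_normed_vector"
  shows "\<exists>G. dominated_graph G \<and> (x0, norm x0) \<in> G \<and> fst ` G = UNIV"
proof -
  define A where "A = {G :: ('a \<times> real) set. dominated_graph G \<and> (x0, norm x0) \<in> G}"
  have "span {(x0, norm x0)} \<in> A"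
    unfolding A_def dominated_graph_def
  proof (intro CollectI conjI)
    show "subspace (span {(x0, norm x0)})" by (rule subspace_span)
    show "(x0, norm x0) \<in> span {(x0, norm x0)}" by (rule span_base) simp
    show "\<forall>(x, a)\<in>span {(x0, norm x0)}. a \<le> norm x"
      by (auto simp: span_singleton intro: mult_right_mono)
  qed
  then have "A \<noteq> {}" by blast
  then have "\<exists>G\<in>A. \<forall>H\<in>A. G \<subseteq> H \<longrightarrow> H = G"
  proof (rule subset_Zorn_nonempty)
    fix C assume "C \<noteq> {}" "subset.chain A C"
    then show "\<Union>C \<in> A"
      unfolding A_def subset_chain_def by (auto intro!: dominated_graph_chain_Union)
  qed
  then obtain G where "G \<in> A" and maximal: "\<And>H. H \<in> A \<Longrightarrow> G \<subseteq> H \<Longrightarrow> H = G" by blast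
  moreover have "fst ` G = UNIV"
  proof (rule ccontr)
    assume "fst ` G \<noteq> UNIV"
    then obtain z where "z \<notin> fst ` G" by blast
    with \<open>G \<in> A\<close> obtain H where "dominated_graph H" "G \<subset> H"
      unfolding A_def using dominated_graph_extend by blast
    with \<open>G \<in> A\<close> maximal show False unfolding A_def by blast
  qed
  ultimately show ?thesis unfolding A_def by blast
qed

lemma total_dominated_graph_functional:
  fixes G :: "('a::real_normed_vector \<times> real) set"
  assumes "dominated_graph G" and "fst ` G = UNIV"
  shows "\<exists>\<phi>::'a \<Rightarrow>\<^sub>L real. norm \<phi> \<le> 1 \<and> (\<forall>(x, a)\<in>G. blinfun_apply \<phi> x = a)"
proof -
  have G: "subspace G" and dom: "\<And>y a. (y, a) \<in> G \<Longrightarrow> a \<le> norm y"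
    using assms(1) unfolding dominated_graph_def by auto
  have add: "(x + y, a + b) \<in> G" if "(x, a) \<in> G" "(y, b) \<in> G" for x y a b
    using subspace_add[OF G that] by simp
  have scaled: "(r *\<^sub>R x, r * a) \<in> G" if "(x, a) \<in> G" for x a r
    using subspace_scale[OF G that, of r] by simp
  have unique: "a = b" if "(x, a) \<in> G" "(x, b) \<in> G" for x a b
    using dom[OF add[OF that(1) scaled[OF that(2), of "-1"]]]
      dom[OF add[OF that(2) scaled[OF that(1), of "-1"]]] by simp
  define f where "f x = (THE a. (x, a) \<in> G)" for x
  have graph: "(x, f x) \<in> G" for x
  proof -
    obtain a where xa: "(x, a) \<in> G" using assms(2) by (metis UNIV_I fst_conv imageE prod.collapse)
    show ?thesis unfolding f_def by (rule theI[of _ a]) (use xa unique in blast)+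
  qed
  have "f (- x) = - f x" for x using unique[OF graph scaled[OF graph, of "-1"]] by simp
  then have bound: "\<bar>f x\<bar> \<le> norm x" for x using dom[OF graph, of x] dom[OF graph, of "-x"] by simp
  have "bounded_linear f"
    by (rule bounded_linear_intro[where K=1])
      (use unique[OF graph add[OF graph graph]] unique[OF graph scaled[OF graph]] bound in auto)
  then have apply_eq: "blinfun_apply (Blinfun f) = f" by (rule bounded_linear_Blinfun_apply)
  have "norm (Blinfun f) \<le> 1" by (rule norm_blinfun_bound) (use bound apply_eq in auto)
  moreover have "\<forall>(x, a)\<in>G. f x = a" using unique[OF graph] by auto
  ultimately show ?thesis using apply_eq by metis
qed

lemma norming_functional:
  fixes x0 :: "'a::real_normed_vector"
  shows "\<exists>\<phi>::'a \<Rightarrow>\<^sub>L real. norm \<phi> \<le> 1 \<and> blinfun_apply \<phi> x0 = norm x0"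
proof -
  obtain G where "dominated_graph G" "(x0, norm x0) \<in> G" "fst ` G = UNIV"
    using total_dominated_graph by blast
  then show ?thesis using total_dominated_graph_functional by fastforce
qed

lemma sum_squares_convex_combination:
  fixes k k' p :: "'i \<Rightarrow> real"
  shows "(\<Sum>i\<in>I. ((1 - u) * k i + u * k' i - p i)\<^sup>2)
       = (\<Sum>i\<in>I. (k i - p i)\<^sup>2) - 2 * u * (\<Sum>i\<in>I. (p i - k i) * (k' i - k i))
         + u\<^sup>2 * (\<Sum>i\<in>I. (k' i - k i)\<^sup>2)"
proof -
  have "((1 - u) * k i + u * k' i - p i)\<^sup>2
      = (k i - p i)\<^sup>2 - 2 * u * ((p i - k i) * (k' i - k i)) + u\<^sup>2 * (k' i - k i)\<^sup>2" for i
    by (simp add: power2_eq_square algebra_simps)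
  then show ?thesis
    by (simp add: sum.distrib sum_subtractf sum_distrib_left)
qed

text \<open>Near an approximate nearest point m of a convex set to p, the angle at m between
  p and any point k of the set is almost obtuse: moving from m towards k by a small
  step u cannot bring the squared distance below the infimum \<delta>.\<close>
lemma near_minimiser_obtuse:
  fixes k m p :: "'i \<Rightarrow> real"
  assumes "\<delta> \<le> (\<Sum>i\<in>I. ((1 - u) * m i + u * k i - p i)\<^sup>2)"
    and "(\<Sum>i\<in>I. (m i - p i)\<^sup>2) < \<delta> + u * \<delta> / 2"
    and "0 < u" and "u * (\<Sum>i\<in>I. (k i - m i)\<^sup>2) \<le> \<delta> / 2"
  shows "(\<Sum>i\<in>I. (p i - m i) * (k i - m i)) < \<delta> / 2"
proof -
  define A where "A = (\<Sum>i\<in>I. (p i - m i) * (k i - m i))"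
  define D where "D = (\<Sum>i\<in>I. (k i - m i)\<^sup>2)"
  have "\<delta> \<le> (\<Sum>i\<in>I. (m i - p i)\<^sup>2) - 2 * u * A + u\<^sup>2 * D"
    using assms(1) unfolding A_def D_def sum_squares_convex_combination .
  then have "2 * u * A < u * \<delta> / 2 + u * (u * D)"
    using assms(2) by (simp add: power2_eq_square)
  also have "u * (u * D) \<le> u * (\<delta> / 2)"
    using assms(3,4) unfolding D_def by (simp add: mult_left_mono)
  finally have "u * (2 * A) < u * \<delta>" by (simp add: algebra_simps)
  then show ?thesis unfolding A_def using assms(3) by simp
qed

text \<open>An approximate nearest point m of K to p is found; if the distance were positive,
  the half-space orthogonal to p - m beyond m would contain K but not p.\<close>
lemma convex_coordinates_approx:
  fixes K :: "('i \<Rightarrow> real) set" and p R :: "'i \<Rightarrow> real" and I :: "'i set"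
  assumes "K \<noteq> {}"
    and convex: "\<And>k k' u. k \<in> K \<Longrightarrow> k' \<in> K \<Longrightarrow> 0 \<le> u \<Longrightarrow> u \<le> 1
                   \<Longrightarrow> (\<lambda>i. (1 - u) * k i + u * k' i) \<in> K"
    and bounded: "\<And>k i. k \<in> K \<Longrightarrow> i \<in> I \<Longrightarrow> \<bar>k i\<bar> \<le> R i"
    and halfspaces: "\<And>a c. (\<And>k. k \<in> K \<Longrightarrow> (\<Sum>i\<in>I. a i * k i) \<le> c) \<Longrightarrow> (\<Sum>i\<in>I. a i * p i) \<le> c"
    and "\<epsilon> > 0"
  shows "\<exists>k\<in>K. (\<Sum>i\<in>I. (k i - p i)\<^sup>2) < \<epsilon>"
proof (rule ccontr)
  define dist2 where "dist2 k = (\<Sum>i\<in>I. (k i - p i)\<^sup>2)" for k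
  define \<delta> where "\<delta> = Inf (dist2 ` K)"
  assume "\<not> ?thesis"
  then have "\<epsilon> \<le> \<delta>"
    unfolding \<delta>_def dist2_def using assms(1) by (auto simp: not_less intro: cInf_greatest)
  then have \<delta>_pos: "\<delta> > 0" using \<open>\<epsilon> > 0\<close> by linarith
  have "bdd_below (dist2 ` K)"
    unfolding dist2_def by (auto intro!: bdd_belowI[of _ 0] sum_nonneg)
  then have \<delta>_le: "\<delta> \<le> dist2 k" if "k \<in> K" for k
    unfolding \<delta>_def using that by (simp add: cInf_lower)
  define C where "C = 1 + (\<Sum>i\<in>I. (2 * R i)\<^sup>2)"
  have spread: "(\<Sum>i\<in>I. (k' i - k i)\<^sup>2) \<le> C" if "k \<in> K" "k' \<in> K" for k k'
  proof -
    have "(k' i - k i)\<^sup>2 \<le> (2 * R i)\<^sup>2" if "i \<in> I" for i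
    proof -
      have "\<bar>k' i - k i\<bar> \<le> 2 * R i"
        using bounded[OF \<open>k \<in> K\<close> that] bounded[OF \<open>k' \<in> K\<close> that] by linarith
      then show ?thesis by (metis abs_ge_zero power2_abs power_mono)
    qed
    then show ?thesis unfolding C_def by (smt (verit) sum_mono)
  qed
  have "C > 0" unfolding C_def by (smt (verit) sum_nonneg zero_le_power2)
  define u where "u = min 1 (\<delta> / (2 * C))"
  have u: "0 < u" "u \<le> 1" "u * C \<le> \<delta> / 2"
    using \<delta>_pos \<open>C > 0\<close> by (auto simp: u_def min_def field_simps)
  have "Inf (dist2 ` K) < \<delta> + u * \<delta> / 2" using u \<delta>_pos unfolding \<delta>_def by simp
  then obtain m where "m \<in> K" and m_near: "dist2 m < \<delta> + u * \<delta> / 2"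
    using cInf_lessD[of "dist2 ` K"] assms(1) by blast
  have behind: "(\<Sum>i\<in>I. (p i - m i) * (k i - m i)) < \<delta> / 2" if "k \<in> K" for k
  proof (rule near_minimiser_obtuse)
    show "\<delta> \<le> (\<Sum>i\<in>I. ((1 - u) * m i + u * k i - p i)\<^sup>2)"
      using \<delta>_le[OF convex[OF \<open>m \<in> K\<close> that]] u unfolding dist2_def by simp
    show "(\<Sum>i\<in>I. (m i - p i)\<^sup>2) < \<delta> + u * \<delta> / 2" using m_near unfolding dist2_def .
    show "u * (\<Sum>i\<in>I. (k i - m i)\<^sup>2) \<le> \<delta> / 2"
      using mult_left_mono[OF spread[OF \<open>m \<in> K\<close> that], of u] u by linarith
  qed (use u in simp)
  have "(\<Sum>i\<in>I. (p i - m i) * p i) \<le> (\<Sum>i\<in>I. (p i - m i) * m i) + \<delta> / 2"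
  proof (rule halfspaces)
    fix k assume "k \<in> K"
    then show "(\<Sum>i\<in>I. (p i - m i) * k i) \<le> (\<Sum>i\<in>I. (p i - m i) * m i) + \<delta> / 2"
      using behind[OF \<open>k \<in> K\<close>] by (simp add: right_diff_distrib sum_subtractf)
  qed
  moreover have "dist2 m = (\<Sum>i\<in>I. (p i - m i) * p i) - (\<Sum>i\<in>I. (p i - m i) * m i)"
    unfolding dist2_def sum_subtractf[symmetric] by (rule sum.cong) (simp_all add: power2_eq_square algebra_simps)
  ultimately have "dist2 m \<le> \<delta> / 2" by linarith
  then show False using \<delta>_le[OF \<open>m \<in> K\<close>] \<delta>_pos by linarith
qed

text \<open>For a norming subspace M, the norm of y is bounded by any common upper bound of
  the values m y over the unit ball of M (which is symmetric).\<close>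
lemma norming_upper_bound:
  fixes M :: "('a::real_normed_vector \<Rightarrow>\<^sub>L real) set"
  assumes "subspace M" and "norming M"
    and bound: "\<And>m. m \<in> M \<Longrightarrow> norm m \<le> 1 \<Longrightarrow> blinfun_apply m y \<le> c"
  shows "norm y \<le> c"
proof -
  have "norm y = Sup {\<bar>blinfun_apply m y\<bar> | m. m \<in> M \<and> norm m \<le> 1}"
    using assms(2) unfolding norming_def by blast
  also have "\<dots> \<le> c"
  proof (rule cSup_least)
    show "{\<bar>blinfun_apply m y\<bar> | m. m \<in> M \<and> norm m \<le> 1} \<noteq> {}"
      using subspace_0[OF assms(1)] by force
  next
    fix r assume "r \<in> {\<bar>blinfun_apply m y\<bar> | m. m \<in> M \<and> norm m \<le> 1}"
    then obtain m where "m \<in> M" "norm m \<le> 1" "r = \<bar>blinfun_apply m y\<bar>" by blast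
    moreover have "- m \<in> M" using subspace_neg[OF assms(1) \<open>m \<in> M\<close>] .
    ultimately show "r \<le> c"
      using bound[of m] bound[of "- m"] by (simp add: blinfun.minus_left)
  qed
  finally show ?thesis .
qed

lemma norming_ball_weak_star_dense:
  fixes M :: "('a::real_normed_vector \<Rightarrow>\<^sub>L real) set" and x :: "'i \<Rightarrow> 'a"
  assumes "subspace M" and "norming M" and "norm z \<le> 1" and "finite I" and "\<epsilon> > 0"
  shows "\<exists>m\<in>M. norm m \<le> 1 \<and> (\<forall>i\<in>I. \<bar>blinfun_apply m (x i) - blinfun_apply z (x i)\<bar> < \<epsilon>)"
proof -
  define B where "B = {m\<in>M. norm m \<le> 1}"
  define eval where "eval m = (\<lambda>i. blinfun_apply m (x i))" for m :: "'a \<Rightarrow>\<^sub>L real"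
  have eval_sum: "(\<Sum>i\<in>I. a i * eval m i) = blinfun_apply m (\<Sum>i\<in>I. a i *\<^sub>R x i)" for a m
    unfolding eval_def by (simp add: blinfun.sum_right blinfun.scaleR_right)
  have "\<exists>k\<in>eval ` B. (\<Sum>i\<in>I. (k i - eval z i)\<^sup>2) < \<epsilon>\<^sup>2"
  proof (rule convex_coordinates_approx)
    show "eval ` B \<noteq> {}" using subspace_0[OF assms(1)] unfolding B_def by force
  next
    fix k k' and u :: real assume "k \<in> eval ` B" "k' \<in> eval ` B" "0 \<le> u" "u \<le> 1"
    then obtain m m' where "m \<in> B" "m' \<in> B" "k = eval m" "k' = eval m'" by blast
    have "(1 - u) *\<^sub>R m + u *\<^sub>R m' \<in> M"
      using \<open>m \<in> B\<close> \<open>m' \<in> B\<close> assms(1) unfolding B_def by (simp add: subspace_add subspace_scale)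
    moreover have "norm ((1 - u) *\<^sub>R m + u *\<^sub>R m') \<le> 1"
    proof -
      have "norm ((1 - u) *\<^sub>R m + u *\<^sub>R m') \<le> (1 - u) * norm m + u * norm m'"
        using norm_triangle_ineq[of "(1 - u) *\<^sub>R m" "u *\<^sub>R m'"] \<open>0 \<le> u\<close> \<open>u \<le> 1\<close> by simp
      also have "\<dots> \<le> (1 - u) * 1 + u * 1"
        using \<open>m \<in> B\<close> \<open>m' \<in> B\<close> \<open>0 \<le> u\<close> \<open>u \<le> 1\<close> unfolding B_def
        by (intro add_mono mult_left_mono) auto
      finally show ?thesis by simp
    qed
    moreover have "(\<lambda>i. (1 - u) * k i + u * k' i) = eval ((1 - u) *\<^sub>R m + u *\<^sub>R m')"
      unfolding \<open>k = eval m\<close> \<open>k' = eval m'\<close> eval_def by (simp add: blinfun.add_left blinfun.scaleR_left)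
    ultimately show "(\<lambda>i. (1 - u) * k i + u * k' i) \<in> eval ` B" unfolding B_def by blast
  next
    fix k i assume "k \<in> eval ` B"
    then show "\<bar>k i\<bar> \<le> norm (x i)" unfolding B_def eval_def by (auto intro: abs_blinfun_le_norm)
  next
    fix a c assume below: "\<And>k. k \<in> eval ` B \<Longrightarrow> (\<Sum>i\<in>I. a i * k i) \<le> c"
    define y where "y = (\<Sum>i\<in>I. a i *\<^sub>R x i)"
    have "norm y \<le> c"
    proof (rule norming_upper_bound[OF assms(1,2)])
      fix m assume "m \<in> M" "norm m \<le> 1"
      then have "(\<Sum>i\<in>I. a i * eval m i) \<le> c" using below unfolding B_def by blast
      then show "blinfun_apply m y \<le> c" unfolding eval_sum y_def .
    qed
    moreover have "blinfun_apply z y \<le> norm y" using abs_blinfun_le_norm[OF assms(3), of y] by linarith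
    ultimately show "(\<Sum>i\<in>I. a i * eval z i) \<le> c" unfolding eval_sum y_def by linarith
  qed (use assms(5) in simp)
  then obtain m where "m \<in> B" and close: "(\<Sum>i\<in>I. (eval m i - eval z i)\<^sup>2) < \<epsilon>\<^sup>2" by blast
  have "\<bar>eval m i - eval z i\<bar> < \<epsilon>" if "i \<in> I" for i
  proof -
    have "\<bar>eval m i - eval z i\<bar>\<^sup>2 \<le> (\<Sum>i\<in>I. (eval m i - eval z i)\<^sup>2)"
      using member_le_sum[of i I "\<lambda>i. (eval m i - eval z i)\<^sup>2", OF that _ assms(4)] by simp
    then have "\<bar>eval m i - eval z i\<bar>\<^sup>2 < \<epsilon>\<^sup>2" using close by linarith
    then show ?thesis by (rule power_less_imp_less_base) (use assms(5) in simp)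
  qed
  then show ?thesis using \<open>m \<in> B\<close> unfolding B_def eval_def by blast
qed

definition dense_sequence :: "(nat \<Rightarrow> 'a::metric_space) \<Rightarrow> bool" where
  "dense_sequence d \<longleftrightarrow> (\<forall>x e. e > 0 \<longrightarrow> (\<exists>k. dist x (d k) < e))"

lemma weak_star_null_of_dense:
  fixes f :: "nat \<Rightarrow> ('a::real_normed_vector \<Rightarrow>\<^sub>L real)"
  assumes "dense_sequence d" and bounded: "\<And>n. norm (f n) \<le> B"
    and on_dense: "\<And>k. (\<lambda>n. blinfun_apply (f n) (d k)) \<longlonglongrightarrow> 0"
  shows "weak_star_null f"
  unfolding weak_star_null_def
proof (intro allI LIMSEQ_I)
  fix x and r :: real assume "r > 0"
  define \<eta> where "\<eta> = r / (2 * (\<bar>B\<bar> + 1))"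
  have "\<eta> > 0" using \<open>r > 0\<close> unfolding \<eta>_def by (simp add: add_pos_nonneg)
  then obtain k where k: "dist x (d k) < \<eta>" using assms(1) unfolding dense_sequence_def by blast
  obtain N where N: "\<And>n. n \<ge> N \<Longrightarrow> norm (blinfun_apply (f n) (d k)) < r / 2"
    using LIMSEQ_D[OF on_dense[of k], of "r / 2"] \<open>r > 0\<close> by auto
  have "norm (blinfun_apply (f n) x - 0) < r" if "n \<ge> N" for n
  proof -
    have "\<bar>blinfun_apply (f n) (x - d k)\<bar> \<le> norm (f n) * norm (x - d k)"
      using norm_blinfun[of "f n" "x - d k"] by simp
    also have "\<dots> \<le> (\<bar>B\<bar> + 1) * \<eta>"
      using bounded[of n] k by (intro mult_mono) (auto simp: dist_norm)
    also have "\<dots> = r / 2"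
      unfolding \<eta>_def using abs_ge_zero[of B] by (simp add: field_simps)
    finally have "\<bar>blinfun_apply (f n) (x - d k)\<bar> \<le> r / 2" .
    moreover have "blinfun_apply (f n) x = blinfun_apply (f n) (x - d k) + blinfun_apply (f n) (d k)"
      by (simp add: blinfun.diff_right)
    ultimately show ?thesis using N[OF that] by simp
  qed
  then show "\<exists>N. \<forall>n\<ge>N. norm (blinfun_apply (f n) x - 0) < r" by blast
qed

lemma norming_approximating_sequence:
  fixes M :: "('a::real_normed_vector \<Rightarrow>\<^sub>L real) set" and d :: "nat \<Rightarrow> 'a"
  assumes "subspace M" and "norming M" and "norm z \<le> 1" and "dense_sequence d"
  shows "\<exists>m. (\<forall>n. m n \<in> M \<and> norm (m n) \<le> 1) \<and> weak_star_null (\<lambda>n. m n - z)"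
proof -
  have "\<forall>n. \<exists>m\<in>M. norm m \<le> 1 \<and>
          (\<forall>k\<in>{..n}. \<bar>blinfun_apply m (d k) - blinfun_apply z (d k)\<bar> < 1 / Suc n)"
    using norming_ball_weak_star_dense[OF assms(1-3) finite_atMost, where x = d] by simp
  then obtain m where m: "\<And>n. m n \<in> M" "\<And>n. norm (m n) \<le> 1"
    and close: "\<And>n k. k \<le> n \<Longrightarrow> \<bar>blinfun_apply (m n) (d k) - blinfun_apply z (d k)\<bar> < 1 / Suc n"
    by (metis atMost_iff)
  have "weak_star_null (\<lambda>n. m n - z)"
  proof (rule weak_star_null_of_dense[OF assms(4)])
    show "norm (m n - z) \<le> 2" for n
      using norm_triangle_ineq4[of "m n" z] m(2)[of n] assms(3) by linarith
  next
    fix k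
    have "eventually (\<lambda>n. norm (blinfun_apply (m n - z) (d k)) \<le> 1 / Suc n) sequentially"
      using eventually_ge_at_top[of k]
      by eventually_elim (use close in \<open>simp add: blinfun.diff_left less_imp_le\<close>)
    moreover have "(\<lambda>n. 1 / Suc n) \<longlonglongrightarrow> 0" using LIMSEQ_Suc[OF lim_const_over_n[of 1]] by simp
    ultimately show "(\<lambda>n. blinfun_apply (m n - z) (d k)) \<longlonglongrightarrow> 0"
      by (rule Lim_null_comparison)
  qed
  then show ?thesis using m by blast
qed

lemma riesz_lemma:
  fixes M :: "'a::real_normed_vector set"
  assumes "subspace M" and "closed M" and "M \<noteq> UNIV"
  shows "\<exists>z. norm z = 1 \<and> (\<forall>m\<in>M. 2/3 \<le> norm (z - m))"
proof -
  obtain y where "y \<notin> M" using assms(3) by blast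
  have "M \<noteq> {}" using subspace_0[OF assms(1)] by blast
  define \<delta> where "\<delta> = infdist y M"
  have "\<delta> > 0" unfolding \<delta>_def by (rule infdist_pos_not_in_closed[OF assms(2) \<open>M \<noteq> {}\<close> \<open>y \<notin> M\<close>])
  then have "Inf ((\<lambda>a. dist y a) ` M) < 3/2 * \<delta>" using infdist_notempty[OF \<open>M \<noteq> {}\<close>, of y] \<delta>_def by simp
  then obtain m0 where "m0 \<in> M" and "dist y m0 < 3/2 * \<delta>"
    using cInf_lessD[of "(\<lambda>a. dist y a) ` M"] \<open>M \<noteq> {}\<close> by blast
  define r where "r = norm (y - m0)"
  have "r > 0" unfolding r_def using \<open>m0 \<in> M\<close> \<open>y \<notin> M\<close> by auto
  have "r < 3/2 * \<delta>" using \<open>dist y m0 < 3/2 * \<delta>\<close> unfolding r_def by (simp add: dist_norm)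
  define z where "z = (1 / r) *\<^sub>R (y - m0)"
  have "norm z = 1" unfolding z_def using \<open>r > 0\<close> r_def by simp
  moreover have "2/3 \<le> norm (z - m)" if "m \<in> M" for m
  proof -
    have "m0 + r *\<^sub>R m \<in> M" using subspace_add[OF assms(1) \<open>m0 \<in> M\<close> subspace_scale[OF assms(1) that]] .
    then have "\<delta> \<le> dist y (m0 + r *\<^sub>R m)" unfolding \<delta>_def by (rule infdist_le)
    also have "\<dots> = norm (r *\<^sub>R (z - m))" unfolding z_def dist_norm using \<open>r > 0\<close>
      by (simp add: scaleR_diff_right algebra_simps)
    also have "\<dots> = r * norm (z - m)" using \<open>r > 0\<close> by simp
    finally have "2/3 * r \<le> r * norm (z - m)" using \<open>r < 3/2 * \<delta>\<close> by linarith
    then show ?thesis using \<open>r > 0\<close> by simp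
  qed
  ultimately show ?thesis by blast
qed

text \<open>Otherwise Riesz's lemma yields a unit z at distance 2/3 from M,
  and approximating z weak* by m n in the unit ball of M gives
  norm (z + (m n - z)) - norm (z - (m n - z)) \<le> 1 - 4/3, contradicting (au*).\<close>
theorem no_proper_closed_norming_subspace:
  fixes M :: "('a::real_normed_vector \<Rightarrow>\<^sub>L real) set" and d :: "nat \<Rightarrow> 'a"
  assumes "property_au_star TYPE('a)" and "dense_sequence d"
    and "subspace M" and "closed M" and "norming M"
  shows "M = UNIV"
proof (rule ccontr)
  assume "M \<noteq> UNIV"
  then obtain z where "norm z = 1" and far: "\<And>m. m \<in> M \<Longrightarrow> 2/3 \<le> norm (z - m)"
    using riesz_lemma[OF assms(3,4)] by blast
  then obtain m where m: "\<And>n. m n \<in> M" "\<And>n. norm (m n) \<le> 1" and "weak_star_null (\<lambda>n. m n - z)"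
    using norming_approximating_sequence[OF assms(3,5) _ assms(2)] by force
  then have lim: "(\<lambda>n. norm (z + (m n - z)) - norm (z - (m n - z))) \<longlonglongrightarrow> 0"
    using assms(1) unfolding property_au_star_def by blast
  have "norm (z + (m n - z)) - norm (z - (m n - z)) \<le> -1/3" for n
  proof -
    have "z - (m n - z) = 2 *\<^sub>R (z - (1/2) *\<^sub>R m n)" by (simp add: algebra_simps scaleR_2)
    then have "norm (z - (m n - z)) = 2 * norm (z - (1/2) *\<^sub>R m n)" by simp
    moreover have "2/3 \<le> norm (z - (1/2) *\<^sub>R m n)" using far subspace_scale[OF assms(3) m(1)] by blast
    moreover have "norm (z + (m n - z)) \<le> 1" using m(2)[of n] by simp
    ultimately show ?thesis by linarith
  qed
  then show False using LIMSEQ_le_const2[OF lim, of "-1/3"] by simp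
qed

lemma separable_imp_dense_sequence:
  assumes "separable_space (euclidean :: 'a::metric_space topology)"
  shows "\<exists>d :: nat \<Rightarrow> 'a. dense_sequence d"
proof -
  obtain C :: "'a set" where "countable C" "closure C = UNIV"
    using assms unfolding separable_space_def by auto
  then have "C \<noteq> {}" by auto
  define d where "d = from_nat_into C"
  have "range d = C" unfolding d_def using \<open>C \<noteq> {}\<close> \<open>countable C\<close> by simp
  have "\<exists>k. dist x (d k) < e" if "e > 0" for x e
  proof -
    have "x \<in> closure C" using \<open>closure C = UNIV\<close> by simp
    then obtain y where "y \<in> C" "dist y x < e" using closure_approachable \<open>e > 0\<close> by blast
    then show ?thesis using \<open>range d = C\<close> by (metis dist_commute rangeE)
  qed
  then show ?thesis unfolding dense_sequence_def by blast
qed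

lemma norming_if_almost_attained:
  fixes M :: "('a::real_normed_vector \<Rightarrow>\<^sub>L real) set"
  assumes almost: "\<And>x e. e > 0 \<Longrightarrow> \<exists>m\<in>M. norm m \<le> 1 \<and> norm x - e \<le> \<bar>blinfun_apply m x\<bar>"
  shows "norming M"
  unfolding norming_def
proof
  fix x :: 'a
  define S where "S = {\<bar>blinfun_apply m x\<bar> | m. m \<in> M \<and> norm m \<le> 1}"
  have "S \<noteq> {}" unfolding S_def using almost[of 1 x] by auto
  have "bdd_above S"
    unfolding S_def bdd_above_def by (rule exI[of _ "norm x"]) (auto intro: abs_blinfun_le_norm)
  have "Sup S \<le> norm x"
    by (rule cSup_least[OF \<open>S \<noteq> {}\<close>]) (auto simp: S_def intro: abs_blinfun_le_norm)
  moreover have "norm x \<le> Sup S"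
  proof (rule field_le_epsilon)
    fix e :: real assume "e > 0"
    then obtain m where "m \<in> M" "norm m \<le> 1" "norm x - e \<le> \<bar>blinfun_apply m x\<bar>"
      using almost by blast
    moreover have "\<bar>blinfun_apply m x\<bar> \<le> Sup S"
      using calculation \<open>bdd_above S\<close> unfolding S_def by (blast intro: cSup_upper)
    ultimately show "norm x \<le> Sup S + e" by linarith
  qed
  ultimately show "norm x = Sup S" by simp
qed

lemma dense_norming_sequence:
  fixes d :: "nat \<Rightarrow> 'a::real_normed_vector"
  assumes "dense_sequence d"
  shows "\<exists>\<phi> :: nat \<Rightarrow> ('a \<Rightarrow>\<^sub>L real). (\<forall>k. norm (\<phi> k) \<le> 1)
              \<and> (\<forall>x e. e > 0 \<longrightarrow> (\<exists>k. norm x - e \<le> \<bar>blinfun_apply (\<phi> k) x\<bar>))"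
proof -
  have "\<forall>k. \<exists>\<psi>::'a \<Rightarrow>\<^sub>L real. norm \<psi> \<le> 1 \<and> blinfun_apply \<psi> (d k) = norm (d k)"
    using norming_functional by blast
  then obtain \<phi> where \<phi>: "\<And>k. norm (\<phi> k) \<le> 1" "\<And>k. blinfun_apply (\<phi> k) (d k) = norm (d k)"
    by metis
  have "\<exists>k. norm x - e \<le> \<bar>blinfun_apply (\<phi> k) x\<bar>" if "e > 0" for x e
  proof -
    obtain k where "dist x (d k) < e / 2"
      using assms \<open>e > 0\<close> unfolding dense_sequence_def by (meson half_gt_zero)
    then have "norm (x - d k) < e / 2" by (simp add: dist_norm)
    moreover have "blinfun_apply (\<phi> k) x = norm (d k) + blinfun_apply (\<phi> k) (x - d k)"
      using \<phi>(2)[of k] by (simp add: blinfun.diff_right)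
    moreover have "\<bar>blinfun_apply (\<phi> k) (x - d k)\<bar> \<le> norm (x - d k)"
      using \<phi>(1) by (rule abs_blinfun_le_norm)
    moreover have "norm x \<le> norm (d k) + norm (x - d k)" by (metis norm_triangle_sub)
    ultimately have "norm x - e \<le> \<bar>blinfun_apply (\<phi> k) x\<bar>" by linarith
    then show ?thesis by blast
  qed
  then show ?thesis using \<phi>(1) by blast
qed

lemma closure_rational_subspace:
  fixes Q :: "'a::real_normed_vector set"
  assumes "0 \<in> Q" and add: "\<And>x y. x \<in> Q \<Longrightarrow> y \<in> Q \<Longrightarrow> x + y \<in> Q"
    and scale: "\<And>q x. x \<in> Q \<Longrightarrow> real_of_rat q *\<^sub>R x \<in> Q"
  shows "subspace (closure Q)"
proof -
  have extend: "f ` closure S \<subseteq> closure Q" if "continuous_on UNIV f" "f ` S \<subseteq> closure Q"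
    for f :: "'b::topological_space \<Rightarrow> 'a" and S
    using image_closure_subset[OF continuous_on_subset[OF that(1)] closed_closure that(2)] by simp
  have add_closure: "x + y \<in> closure Q" if "x \<in> closure Q" "y \<in> closure Q" for x y
  proof -
    have "(\<lambda>x. x + y') ` closure Q \<subseteq> closure Q" if "y' \<in> Q" for y'
      by (rule extend) (use add that closure_subset in \<open>auto intro: continuous_intros\<close>)
    then have "(\<lambda>y. x + y) ` closure Q \<subseteq> closure Q"
      by (intro extend) (use \<open>x \<in> closure Q\<close> in \<open>auto intro: continuous_intros\<close>)
    then show ?thesis using \<open>y \<in> closure Q\<close> by blast
  qed
  have scale_closure: "c *\<^sub>R x \<in> closure Q" if "x \<in> closure Q" for c x
  proof -
    have "(\<lambda>c. c *\<^sub>R x') ` closure \<rat> \<subseteq> closure Q" if "x' \<in> Q" for x'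
      by (rule extend) (use scale that closure_subset in \<open>auto elim!: Rats_cases intro: continuous_intros\<close>)
    then have "(\<lambda>x. c *\<^sub>R x) ` closure Q \<subseteq> closure Q"
      by (intro extend) (auto simp: Rats_closure_real intro: continuous_intros)
    then show ?thesis using that by blast
  qed
  show ?thesis
    unfolding subspace_def using \<open>0 \<in> Q\<close> closure_subset add_closure scale_closure by blast
qed

lemma countable_rational_span:
  fixes \<phi> :: "nat \<Rightarrow> 'a::real_normed_vector"
  shows "\<exists>Q. countable Q \<and> range \<phi> \<subseteq> Q \<and> subspace (closure Q)"
proof -
  define comb where "comb qs = (\<Sum>(q, k)\<leftarrow>qs. real_of_rat q *\<^sub>R \<phi> k)" for qs :: "(rat \<times> nat) list"
  have "subspace (closure (range comb))"
  proof (rule closure_rational_subspace)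
    show "0 \<in> range comb" unfolding comb_def by (rule range_eqI[of _ _ "[]"]) simp
  next
    fix x y assume "x \<in> range comb" "y \<in> range comb"
    then obtain qs rs where "x = comb qs" "y = comb rs" by blast
    then have "x + y = comb (qs @ rs)" unfolding comb_def by simp
    then show "x + y \<in> range comb" by blast
  next
    fix q x assume "x \<in> range comb"
    then obtain qs where "x = comb qs" by blast
    moreover have "comb (map (\<lambda>(p, k). (q * p, k)) rs) = real_of_rat q *\<^sub>R comb rs" for rs
      unfolding comb_def by (induction rs) (auto simp: of_rat_mult scaleR_add_right)
    ultimately have "real_of_rat q *\<^sub>R x = comb (map (\<lambda>(p, k). (q * p, k)) qs)" by simp
    then show "real_of_rat q *\<^sub>R x \<in> range comb" by blast
  qed
  moreover have "range \<phi> \<subseteq> range comb"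
  proof
    fix x assume "x \<in> range \<phi>"
    then obtain k where "x = \<phi> k" by blast
    then have "x = comb [(1, k)]" unfolding comb_def by simp
    then show "x \<in> range comb" by blast
  qed
  moreover have "countable (range comb)" by simp
  ultimately show ?thesis by blast
qed

theorem proposition2p2:
  assumes "separable_space (euclidean :: 'a::banach topology)"
    and "property_au_star TYPE('a)"
  shows "(\<forall>M :: ('a \<Rightarrow>\<^sub>L real) set. subspace M \<and> closed M \<and> norming M \<longrightarrow> M = UNIV)
         \<and> separable_space (euclidean :: ('a \<Rightarrow>\<^sub>L real) topology)"
proof -
  obtain d :: "nat \<Rightarrow> 'a" where "dense_sequence d"
    using separable_imp_dense_sequence[OF assms(1)] by blast
  have no_proper: "\<forall>M :: ('a \<Rightarrow>\<^sub>L real) set. subspace M \<and> closed M \<and> norming M \<longrightarrow> M = UNIV"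
    using no_proper_closed_norming_subspace[OF assms(2) \<open>dense_sequence d\<close>] by blast
  obtain \<phi> :: "nat \<Rightarrow> ('a \<Rightarrow>\<^sub>L real)" where \<phi>: "\<And>k. norm (\<phi> k) \<le> 1"
    and attained: "\<And>x e. e > 0 \<Longrightarrow> \<exists>k. norm x - e \<le> \<bar>blinfun_apply (\<phi> k) x\<bar>"
    using dense_norming_sequence[OF \<open>dense_sequence d\<close>] by blast
  obtain Q where "countable Q" "range \<phi> \<subseteq> Q" "subspace (closure Q)"
    using countable_rational_span by blast
  have "norming (closure Q)"
    by (rule norming_if_almost_attained) (use \<phi> attained \<open>range \<phi> \<subseteq> Q\<close> closure_subset in blast)
  then have "closure Q = UNIV" using no_proper \<open>subspace (closure Q)\<close> by blast
  then have "separable_space (euclidean :: ('a \<Rightarrow>\<^sub>L real) topology)"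
    unfolding separable_space_def using \<open>countable Q\<close> by (intro exI[of _ Q]) simp
  with no_proper show ?thesis by blast
qed

end
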